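(* Let $F$ be a field and consider seven lines $l_x,l_y,l_z,l_1,l_2,l_3,l_4$ in the plane $F^2$ such that for each $i\in\{1,2,3,4\}$ the line $l_i$ meets each of $l_x,l_y,l_z$ in exactly one point. For $i\in\{1,2,3,4\}$ let $x_i,y_i,z_i$ be the first coordinates (projections onto the $x$-axis) of the intersection points of $l_i$ with $l_x$, $l_y$, $l_z$ respectively. Then $$\det\begin{pmatrix} x_1-y_1 & x_1-z_1 & z_1(x_1-y_1) & y_1(x_1-z_1)\\ x_2-y_2 & x_2-z_2 & z_2(x_2-y_2) & y_2(x_2-z_2)\\ x_3-y_3 & x_3-z_3 & z_3(x_3-y_3) & y_3(x_3-z_3)\\ x_4-y_4 & x_4-z_4 & z_4(x_4-y_4) & y_4(x_4-z_4) \end{pmatrix}=0.$$ *)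

theory Defs
  imports "HOL-Analysis.Analysis"
begin

definition is_line :: "('a::field \<times> 'a) set \<Rightarrow> bool" where
  "is_line L \<longleftrightarrow> (\<exists>a b c. (a \<noteq> 0 \<or> b \<noteq> 0) \<and> L = {(x, y). a * x + b * y = c})"

definition meet_once :: "('a \<times> 'a) set \<Rightarrow> ('a \<times> 'a) set \<Rightarrow> bool" where
  "meet_once L M \<longleftrightarrow> (\<exists>!p. p \<in> L \<inter> M)"

definition meet_x :: "('a \<times> 'a) set \<Rightarrow> ('a \<times> 'a) set \<Rightarrow> 'a" where
  "meet_x L M = fst (THE p. p \<in> L \<inter> M)"

end

theory Submission
  imports Defs
begin

text \<open>Every line other than a vertical one is the graph of an affine function, so on three
  non-vertical lines the intersection points with \<open>l\<^sub>i\<close> are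
  \<open>(x, \<alpha>\<^sub>1 x + \<beta>\<^sub>1)\<close>, \<open>(y, \<alpha>\<^sub>2 y + \<beta>\<^sub>2)\<close>, \<open>(z, \<alpha>\<^sub>3 z + \<beta>\<^sub>3)\<close>.
  Their collinearity is a single bilinear equation in \<open>x, y, z\<close> whose coefficients do not
  depend on \<open>i\<close>, and it is a linear combination of the four entries of the \<open>i\<close>-th row. Hence
  one fixed vector lies in the kernel of the matrix; it is nonzero unless
  \<open>l\<^sub>x = l\<^sub>y = l\<^sub>z\<close>, in which case all rows vanish. A vertical line
  \<open>l\<^sub>x\<close> (resp. \<open>l\<^sub>y\<close>, \<open>l\<^sub>z\<close>) makes \<open>x\<close> (resp. \<open>y\<close>, \<open>z\<close>) constant,
  which again yields a fixed kernel vector.\<close>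

lemma line_vertical_or_graph:
  fixes L :: "('a::field \<times> 'a) set"
  assumes "is_line L"
  shows "(\<exists>\<gamma>. L = {(x, y). x = \<gamma>}) \<or> (\<exists>\<alpha> \<beta>. L = {(x, y). y = \<alpha> * x + \<beta>})"
proof -
  obtain a b c where ab: "a \<noteq> 0 \<or> b \<noteq> 0" and L: "L = {(x, y). a * x + b * y = c}"
    using assms unfolding is_line_def by blast
  show ?thesis
  proof (cases "b = 0")
    case True
    then have "L = {(x, y). x = c / a}"
      using ab by (auto simp: L field_simps)
    then show ?thesis by blast
  next
    case False
    then have "L = {(x, y). y = (- a / b) * x + c / b}"
      by (auto simp: L field_simps)
    then show ?thesis by blast
  qed
qed

lemma collinear_on_line:
  fixes L :: "('a::field \<times> 'a) set"
  assumes "is_line L" "(x1, y1) \<in> L" "(x2, y2) \<in> L" "(x3, y3) \<in> L"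
  shows "(x2 - x1) * (y3 - y1) = (x3 - x1) * (y2 - y1)"
proof -
  obtain a b c where ab: "a \<noteq> 0 \<or> b \<noteq> 0" and L: "L = {(x, y). a * x + b * y = c}"
    using assms(1) unfolding is_line_def by blast
  define d where "d = (x2 - x1) * (y3 - y1) - (x3 - x1) * (y2 - y1)"
  have "a * (x2 - x1) + b * (y2 - y1) = 0" "a * (x3 - x1) + b * (y3 - y1) = 0"
    using assms(2-4) by (auto simp: L algebra_simps)
  then have "a * d = 0" "b * d = 0"
    unfolding d_def by algebra+
  then show ?thesis
    using ab by (auto simp: d_def)
qed

lemma meet_x_point:
  assumes "meet_once L M"
  obtains y where "(meet_x L M, y) \<in> L" "(meet_x L M, y) \<in> M"
proof -
  have "(THE p. p \<in> L \<inter> M) \<in> L \<inter> M"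
    using assms unfolding meet_once_def by (rule theI')
  then show ?thesis
    using that unfolding meet_x_def by (metis IntD1 IntD2 prod.collapse)
qed

definition abscissa_form :: "'a::field^4 \<Rightarrow> 'a \<Rightarrow> 'a \<Rightarrow> 'a \<Rightarrow> 'a" where
  "abscissa_form w x y z = w$1 * (x - y) + w$2 * (x - z) + w$3 * (z * (x - y)) + w$4 * (y * (x - z))"

lemma vector_4:
  "(vector [a, b, c, d] :: 'a::zero^4)$1 = a"
  "(vector [a, b, c, d] :: 'a::zero^4)$2 = b"
  "(vector [a, b, c, d] :: 'a::zero^4)$3 = c"
  "(vector [a, b, c, d] :: 'a::zero^4)$4 = d"
  unfolding vector_def by simp_all

lemma vector_4_eq_0_iff:
  "(vector [a, b, c, d] :: 'a::zero^4) = 0 \<longleftrightarrow> a = 0 \<and> b = 0 \<and> c = 0 \<and> d = 0"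
  by (simp add: vec_eq_iff forall_4 vector_4)

lemma abscissa_form_vertical:
  fixes \<gamma> :: "'a::field"
  shows "abscissa_form (vector [\<gamma>, -\<gamma>, -1, 1]) \<gamma> y z = 0"
    and "abscissa_form (vector [0, \<gamma>, 0, -1]) x \<gamma> z = 0"
    and "abscissa_form (vector [\<gamma>, 0, -1, 0]) x y \<gamma> = 0"
  by (simp_all add: abscissa_form_def vector_4 algebra_simps)

lemma abscissa_form_graphs:
  fixes \<alpha>1 \<alpha>2 \<alpha>3 \<beta>1 \<beta>2 \<beta>3 :: "'a::field"
  shows "abscissa_form (vector [\<beta>1 - \<beta>3, \<beta>2 - \<beta>1, \<alpha>1 - \<alpha>3, \<alpha>2 - \<alpha>1]) x y z
    = (y - x) * ((\<alpha>3 * z + \<beta>3) - (\<alpha>1 * x + \<beta>1)) - (z - x) * ((\<alpha>2 * y + \<beta>2) - (\<alpha>1 * x + \<beta>1))"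
  by (simp add: abscissa_form_def vector_4 algebra_simps)

lemma det_eq_0_if_abscissa_form_vanishes:
  fixes x y z :: "4 \<Rightarrow> 'a::field"
  assumes "w \<noteq> 0" "\<And>i. abscissa_form w (x i) (y i) (z i) = 0"
  shows "det ((\<chi> i. vector [x i - y i, x i - z i, z i * (x i - y i), y i * (x i - z i)]) :: 'a^4^4) = 0"
proof -
  let ?A = "(\<chi> i. vector [x i - y i, x i - z i, z i * (x i - y i), y i * (x i - z i)]) :: 'a^4^4"
  have "(?A *v w)$i = abscissa_form w (x i) (y i) (z i)" for i
    by (simp add: matrix_vector_mult_def sum_4 vector_4 abscissa_form_def mult.commute)
  then have "?A *v w = 0"
    using assms(2) by (simp add: vec_eq_iff)
  then have "\<not> (\<exists>B. B ** ?A = mat 1)"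
    using assms(1) matrix_left_invertible_ker by blast
  then show ?thesis
    using invertible_det_nz[of ?A] invertible_left_inverse[of ?A] by blast
qed

lemma abscissa_relation:
  fixes lx ly lz :: "('a::field \<times> 'a) set"
  assumes "is_line lx" "is_line ly" "is_line lz"
  obtains w :: "'a^4" where "w \<noteq> 0"
    and "\<And>L. is_line L \<Longrightarrow> meet_once L lx \<Longrightarrow> meet_once L ly \<Longrightarrow> meet_once L lz \<Longrightarrow>
           abscissa_form w (meet_x L lx) (meet_x L ly) (meet_x L lz) = 0"
proof -
  consider (vertical_x) \<gamma> where "lx = {(x, y). x = \<gamma>}"
    | (vertical_y) \<gamma> where "ly = {(x, y). x = \<gamma>}"
    | (vertical_z) \<gamma> where "lz = {(x, y). x = \<gamma>}"
    | (graphs) \<alpha>1 \<beta>1 \<alpha>2 \<beta>2 \<alpha>3 \<beta>3 where "lx = {(x, y). y = \<alpha>1 * x + \<beta>1}"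
        "ly = {(x, y). y = \<alpha>2 * x + \<beta>2}" "lz = {(x, y). y = \<alpha>3 * x + \<beta>3}"
    using line_vertical_or_graph[OF assms(1)] line_vertical_or_graph[OF assms(2)]
      line_vertical_or_graph[OF assms(3)] by blast
  then show ?thesis
  proof cases
    case (vertical_x \<gamma>)
    have "meet_x L lx = \<gamma>" if "meet_once L lx" for L
      by (rule meet_x_point[OF that]) (simp add: vertical_x)
    then show ?thesis
      by (intro that[of "vector [\<gamma>, -\<gamma>, -1, 1]"])
        (simp_all add: vector_4_eq_0_iff abscissa_form_vertical)
  next
    case (vertical_y \<gamma>)
    have "meet_x L ly = \<gamma>" if "meet_once L ly" for L
      by (rule meet_x_point[OF that]) (simp add: vertical_y)
    then show ?thesis
      by (intro that[of "vector [0, \<gamma>, 0, -1]"])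
        (simp_all add: vector_4_eq_0_iff abscissa_form_vertical)
  next
    case (vertical_z \<gamma>)
    have "meet_x L lz = \<gamma>" if "meet_once L lz" for L
      by (rule meet_x_point[OF that]) (simp add: vertical_z)
    then show ?thesis
      by (intro that[of "vector [\<gamma>, 0, -1, 0]"])
        (simp_all add: vector_4_eq_0_iff abscissa_form_vertical)
  next
    case graphs
    show ?thesis
    proof (cases "lx = ly \<and> ly = lz")
      case True
      then show ?thesis
        by (intro that[of "vector [1, 0, 0, 0]"]) (simp_all add: vector_4_eq_0_iff abscissa_form_def)
    next
      case False
      let ?w = "vector [\<beta>1 - \<beta>3, \<beta>2 - \<beta>1, \<alpha>1 - \<alpha>3, \<alpha>2 - \<alpha>1] :: 'a^4"
      have "?w \<noteq> 0"
        using False by (auto simp: vector_4_eq_0_iff graphs)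
      moreover have "abscissa_form ?w (meet_x L lx) (meet_x L ly) (meet_x L lz) = 0"
        if line: "is_line L" and meets: "meet_once L lx" "meet_once L ly" "meet_once L lz" for L
      proof -
        let ?x = "meet_x L lx" and ?y = "meet_x L ly" and ?z = "meet_x L lz"
        obtain y1 where P1: "(?x, y1) \<in> L" "(?x, y1) \<in> lx"
          using meet_x_point[OF meets(1)] .
        obtain y2 where P2: "(?y, y2) \<in> L" "(?y, y2) \<in> ly"
          using meet_x_point[OF meets(2)] .
        obtain y3 where P3: "(?z, y3) \<in> L" "(?z, y3) \<in> lz"
          using meet_x_point[OF meets(3)] .
        have "(?y - ?x) * (y3 - y1) = (?z - ?x) * (y2 - y1)"
          using collinear_on_line[OF line P1(1) P2(1) P3(1)] .
        moreover have "y1 = \<alpha>1 * ?x + \<beta>1" "y2 = \<alpha>2 * ?y + \<beta>2" "y3 = \<alpha>3 * ?z + \<beta>3"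
          using P1(2) P2(2) P3(2) by (simp_all add: graphs)
        ultimately show ?thesis
          by (simp add: abscissa_form_graphs)
      qed
      ultimately show ?thesis
        by (rule that)
    qed
  qed
qed

theorem proposition5:
  fixes lx ly lz :: "('a::field \<times> 'a) set"
    and l :: "4 \<Rightarrow> ('a \<times> 'a) set"
  assumes "is_line lx" "is_line ly" "is_line lz"
    and "\<And>i. is_line (l i)"
    and "\<And>i. meet_once (l i) lx \<and> meet_once (l i) ly \<and> meet_once (l i) lz"
  shows "let x = (\<lambda>i. meet_x (l i) lx); y = (\<lambda>i. meet_x (l i) ly); z = (\<lambda>i. meet_x (l i) lz)
         in det ((\<chi> i. vector [x i - y i, x i - z i, z i * (x i - y i), y i * (x i - z i)])
                   :: 'a^4^4) = 0"
proof -
  obtain w :: "'a^4" where "w \<noteq> 0"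
    and w: "\<And>L. is_line L \<Longrightarrow> meet_once L lx \<Longrightarrow> meet_once L ly \<Longrightarrow> meet_once L lz \<Longrightarrow>
              abscissa_form w (meet_x L lx) (meet_x L ly) (meet_x L lz) = 0"
    using abscissa_relation[OF assms(1-3)] by blast
  show ?thesis
    unfolding Let_def using \<open>w \<noteq> 0\<close>
    by (rule det_eq_0_if_abscissa_form_vanishes) (use w assms(4,5) in blast)
qed

end
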